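(* Suppose $|\Omega| = |A| = 2$. Let $\Sigma$ be a canonical ambiguous experiment (a nonempty closed convex set of maps $\sigma: \Omega \to \Delta(A)$) with $\tau^{*} \in BR(\Sigma)$. Then there exists $\sigma \in \Sigma$ with $\tau^{*} \in BR(\sigma)$.
   Context: Setting: $\Omega$ is a finite set of states, $A$ a finite set of receiver actions. Sender and receiver share a set of priors $P \subseteq \Delta(\Omega)$, nonempty, closed and convex; the receiver has maxmin expected utility preferences with payoff $u_r : A \times \Omega \to \mathbb{R}$. A canonical experiment is a map $\sigma: \Omega \to \Delta(A)$, written $\sigma(a\mid\omega)$. A receiver strategy is $\tau: A \to \Delta(A)$. For $p \in P$, $u_r(p,\sigma,\tau) = \sum_{\omega,m,a} p(\omega)\sigma(m\mid\omega)\tau(a\mid m)u_r(a,\omega)$ and $u_r(\sigma,\tau) = \min_{p\in P} u_r(p,\sigma,\tau)$. For a canonical ambiguous experiment $\Sigma$, $U_r(\Sigma,\tau) = \min_{\sigma \in \Sigma} u_r(\sigma,\tau)$. Best responses: $BR(\sigma) = \arg\max_{\tau} u_r(\sigma,\tau)$ and $BR(\Sigma) = \arg\max_{\tau} U_r(\Sigma,\tau)$, over all $\tau: A \to \Delta(A)$. The obedient strategy $\tau^{*}$ is $\tau^{*}(a\mid a)=1$ for all $a \in A$. *)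

theory Defs
  imports "HOL-Analysis.Analysis"
begin

definition is_dist :: "real ^ 'n \<Rightarrow> bool" where
  "is_dist p \<longleftrightarrow> (\<forall>i. 0 \<le> p $ i) \<and> (\<Sum>i\<in>UNIV. p $ i) = 1"

text \<open>Canonical experiment sigma : Omega -> Delta(A); row w is the distribution
  over messages (= actions) in state w, i.e. sigma(m|w).\<close>
definition canon_experiment :: "real ^ 'a ^ 'w \<Rightarrow> bool" where
  "canon_experiment \<sigma> \<longleftrightarrow> (\<forall>w. is_dist (\<sigma> $ w))"

text \<open>Receiver strategy tau : A -> Delta(A), entry (m,a) is tau(a|m).\<close>
definition strategy :: "real ^ 'a ^ 'a \<Rightarrow> bool" where
  "strategy \<tau> \<longleftrightarrow> (\<forall>m. is_dist (\<tau> $ m))"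

definition ur_p :: "('a \<Rightarrow> 'w \<Rightarrow> real) \<Rightarrow> real ^ 'w \<Rightarrow> real ^ 'a ^ 'w \<Rightarrow> real ^ 'a ^ 'a \<Rightarrow> real" where
  "ur_p u p \<sigma> \<tau> = (\<Sum>w\<in>UNIV. \<Sum>m\<in>UNIV. \<Sum>a\<in>UNIV. p $ w * \<sigma> $ w $ m * \<tau> $ m $ a * u a w)"

text \<open>Maxmin payoff: minimum over priors (attained since P is compact).\<close>
definition ur :: "('a \<Rightarrow> 'w \<Rightarrow> real) \<Rightarrow> (real ^ 'w) set \<Rightarrow> real ^ 'a ^ 'w \<Rightarrow> real ^ 'a ^ 'a \<Rightarrow> real" where
  "ur u P \<sigma> \<tau> = (INF p\<in>P. ur_p u p \<sigma> \<tau>)"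

definition UR :: "('a \<Rightarrow> 'w \<Rightarrow> real) \<Rightarrow> (real ^ 'w) set \<Rightarrow> (real ^ 'a ^ 'w) set \<Rightarrow> real ^ 'a ^ 'a \<Rightarrow> real" where
  "UR u P S \<tau> = (INF \<sigma>\<in>S. ur u P \<sigma> \<tau>)"

definition BR :: "('a \<Rightarrow> 'w \<Rightarrow> real) \<Rightarrow> (real ^ 'w) set \<Rightarrow> real ^ 'a ^ 'w \<Rightarrow> (real ^ 'a ^ 'a) set" where
  "BR u P \<sigma> = {\<tau>. strategy \<tau> \<and> (\<forall>\<tau>'. strategy \<tau>' \<longrightarrow> ur u P \<sigma> \<tau>' \<le> ur u P \<sigma> \<tau>)}"

definition BR_amb :: "('a \<Rightarrow> 'w \<Rightarrow> real) \<Rightarrow> (real ^ 'w) set \<Rightarrow> (real ^ 'a ^ 'w) set \<Rightarrow> (real ^ 'a ^ 'a) set" where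
  "BR_amb u P S = {\<tau>. strategy \<tau> \<and> (\<forall>\<tau>'. strategy \<tau>' \<longrightarrow> UR u P S \<tau>' \<le> UR u P S \<tau>)}"

definition obedient :: "real ^ 'a ^ 'a" where
  "obedient = (\<chi> m a. if a = m then 1 else 0)"

end

theory Submission
  imports Defs
begin

text \<open>With two states the set of priors is a segment \<open>[p0, p1]\<close>, so the maxmin payoff against
  an experiment is the smaller of the payoffs at \<open>p0\<close> and \<open>p1\<close>. With two actions and a canonical
  experiment, deviating from a recommendation amounts to always playing the other action, so obedience
  is a best response to \<open>\<sigma>\<close> as soon as, at a prior minimising the obedient payoff, obeying is at
  least as good as every constant action.

  Let \<open>v\<close> be the ambiguity-averse value of obedience and consider, for \<open>\<sigma> \<in> \<Sigma>\<close> and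
  \<open>p \<in> {p0, p1}\<close>, the payoffs of obeying and of each constant action, shifted by \<open>v\<close>. If the
  convex hull of these vectors missed the nonpositive orthant, a separating probability vector would
  give a mixture of obedience and constant actions that earns strictly more than \<open>v\<close> against every
  \<open>\<sigma> \<in> \<Sigma>\<close>, contradicting \<open>\<tau>\<^sup>* \<in> BR(\<Sigma>)\<close>. So some combination
  \<open>(1 - d) \<cdot> (p0, x) + d \<cdot> (p1, y)\<close> has nonpositive shifted payoffs; moving \<open>\<sigma>\<close> along
  \<open>[x, y]\<close> until the prior \<open>(1 - d) p0 + d p1\<close> minimises the obedient payoff gives the
  required experiment.\<close>

lemma is_dist_norm_le_1:
  assumes "is_dist (p :: real ^ 'n)"
  shows "norm p \<le> 1"
proof -
  have "norm p \<le> (\<Sum>i\<in>UNIV. \<bar>p $ i\<bar>)" by (rule norm_le_l1_cart)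
  also have "\<dots> = 1" using assms by (simp add: is_dist_def)
  finally show ?thesis .
qed

lemma compact_dists:
  assumes "closed P" "\<forall>p\<in>P. is_dist (p :: real ^ 'n)"
  shows "compact P"
  using assms is_dist_norm_le_1 by (metis bounded_iff compact_eq_bounded_closed)

lemma compact_canon_experiments:
  fixes S :: "(real ^ 'a ^ 'w) set"
  assumes "closed S" "\<forall>\<sigma>\<in>S. canon_experiment \<sigma>"
  shows "compact S"
proof -
  have "norm \<sigma> \<le> real CARD('w)" if "\<sigma> \<in> S" for \<sigma>
  proof -
    have "norm \<sigma> \<le> (\<Sum>w\<in>UNIV. norm (\<sigma> $ w))"
      unfolding norm_vec_def by (rule L2_set_le_sum) simp
    also have "\<dots> \<le> (\<Sum>w\<in>(UNIV::'w set). 1)"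
      using assms(2) that by (intro sum_mono is_dist_norm_le_1) (auto simp: canon_experiment_def)
    finally show ?thesis by simp
  qed
  then show ?thesis using assms(1) by (metis bounded_iff compact_eq_bounded_closed)
qed

lemma payoff_lower_bound:
  fixes u :: "'a::finite \<Rightarrow> 'w::finite \<Rightarrow> real"
  obtains c where "\<And>a w. c \<le> u a w"
proof -
  have "bdd_below (range (case_prod u))" by (rule bdd_below_finite) simp
  then show ?thesis using that by (auto simp: bdd_below_def)
qed

lemma total_probability:
  assumes "is_dist p" "canon_experiment \<sigma>" "strategy \<tau>"
  shows "(\<Sum>w\<in>UNIV. \<Sum>m\<in>UNIV. \<Sum>a\<in>UNIV. p $ w * \<sigma> $ w $ m * \<tau> $ m $ a) = 1"
  using assms by (simp add: canon_experiment_def strategy_def is_dist_def flip: sum_distrib_left)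

lemma ur_p_ge_lower_bound:
  assumes "is_dist p" "canon_experiment \<sigma>" "strategy \<tau>" "\<And>a w. c \<le> u a w"
  shows "c \<le> ur_p u p \<sigma> \<tau>"
proof -
  have nonneg: "0 \<le> p $ w * \<sigma> $ w $ m * \<tau> $ m $ a" for w m a
    using assms(1-3) by (simp add: canon_experiment_def strategy_def is_dist_def)
  have "c = (\<Sum>w\<in>UNIV. \<Sum>m\<in>UNIV. \<Sum>a\<in>UNIV. p $ w * \<sigma> $ w $ m * \<tau> $ m $ a * c)"
    using total_probability[OF assms(1-3)] by (simp flip: sum_distrib_right)
  also have "\<dots> \<le> ur_p u p \<sigma> \<tau>"
    unfolding ur_p_def using nonneg assms(4) by (intro sum_mono mult_left_mono) auto
  finally show ?thesis .
qed

lemma ur_le_ur_p: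
  assumes "\<forall>p\<in>P. is_dist p" "canon_experiment \<sigma>" "strategy \<tau>" "p \<in> P"
  shows "ur u P \<sigma> \<tau> \<le> ur_p u p \<sigma> \<tau>"
proof -
  obtain c where "\<And>a w. c \<le> u a w" using payoff_lower_bound[of u] by blast
  then have "bdd_below ((\<lambda>p. ur_p u p \<sigma> \<tau>) ` P)"
    using assms(1-3) ur_p_ge_lower_bound by (metis (no_types, lifting) bdd_belowI2)
  then show ?thesis unfolding ur_def using assms(4) by (rule cINF_lower)
qed

lemma UR_le_ur:
  assumes "\<forall>p\<in>P. is_dist p" "P \<noteq> {}" "\<forall>\<sigma>\<in>S. canon_experiment \<sigma>" "strategy \<tau>" "\<sigma> \<in> S"
  shows "UR u P S \<tau> \<le> ur u P \<sigma> \<tau>"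
proof -
  obtain c where "\<And>a w. c \<le> u a w" using payoff_lower_bound[of u] by blast
  then have "c \<le> ur u P \<sigma>' \<tau>" if "\<sigma>' \<in> S" for \<sigma>'
    unfolding ur_def using assms that by (intro cINF_greatest ur_p_ge_lower_bound) auto
  then have "bdd_below ((\<lambda>\<sigma>. ur u P \<sigma> \<tau>) ` S)" by (rule bdd_belowI2)
  then show ?thesis unfolding UR_def using assms(5) by (rule cINF_lower)
qed

lemma linear_ur_p_prior: "linear (\<lambda>p. ur_p u p \<sigma> \<tau>)"
  by (rule linearI) (simp_all add: ur_p_def algebra_simps sum.distrib sum_distrib_left)

lemma linear_ur_p_experiment: "linear (\<lambda>\<sigma>. ur_p u p \<sigma> \<tau>)"
  by (rule linearI) (simp_all add: ur_p_def algebra_simps sum.distrib sum_distrib_left)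

lemma linear_ur_p_strategy: "linear (ur_p u p \<sigma>)"
  by (rule linearI) (simp_all add: ur_p_def algebra_simps sum.distrib sum_distrib_left)

lemma ur_p_convex_combination_prior:
  "ur_p u ((1 - t) *\<^sub>R p + t *\<^sub>R q) \<sigma> \<tau> = (1 - t) * ur_p u p \<sigma> \<tau> + t * ur_p u q \<sigma> \<tau>"
  by (simp add: linear_add[OF linear_ur_p_prior] linear_scale[OF linear_ur_p_prior])

lemma ur_p_convex_combination_experiment:
  "ur_p u p ((1 - t) *\<^sub>R \<sigma> + t *\<^sub>R \<sigma>') \<tau> = (1 - t) * ur_p u p \<sigma> \<tau> + t * ur_p u p \<sigma>' \<tau>"
  by (simp add: linear_add[OF linear_ur_p_experiment] linear_scale[OF linear_ur_p_experiment])

lemma continuous_on_ur_p_experiment: "continuous_on S (\<lambda>\<sigma>. ur_p u p \<sigma> \<tau>)"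
  using linear_ur_p_experiment by (intro linear_continuous_on) (simp add: linear_conv_bounded_linear)

definition always :: "'a \<Rightarrow> real ^ 'a ^ 'a" where
  "always a = (\<chi> m b. if b = a then 1 else 0)"

definition action_payoff :: "('a \<Rightarrow> 'w \<Rightarrow> real) \<Rightarrow> real ^ 'w \<Rightarrow> 'a \<Rightarrow> real" where
  "action_payoff u p a = (\<Sum>w\<in>UNIV. p $ w * u a w)"

lemma action_payoff_convex_combination:
  "action_payoff u ((1 - t) *\<^sub>R p + t *\<^sub>R q) a = (1 - t) * action_payoff u p a + t * action_payoff u q a"
  by (simp add: action_payoff_def algebra_simps sum.distrib sum_subtractf sum_distrib_left)

lemma strategy_obedient: "strategy obedient"
  unfolding strategy_def is_dist_def obedient_def by (simp add: if_distrib)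

lemma ur_p_obedient:
  "ur_p u p \<sigma> obedient = (\<Sum>w\<in>UNIV. \<Sum>m\<in>UNIV. p $ w * \<sigma> $ w $ m * u m w)"
  unfolding ur_p_def obedient_def by (simp add: if_distrib if_distribR cong: if_cong)

lemma ur_p_always:
  assumes "canon_experiment \<sigma>"
  shows "ur_p u p \<sigma> (always a) = action_payoff u p a"
proof -
  have "ur_p u p \<sigma> (always a) = (\<Sum>w\<in>UNIV. p $ w * u a w * (\<Sum>m\<in>UNIV. \<sigma> $ w $ m))"
    unfolding ur_p_def always_def by (simp add: if_distrib if_distribR sum_distrib_left mult_ac cong: if_cong)
  then show ?thesis using assms by (simp add: canon_experiment_def is_dist_def action_payoff_def)
qed

text \<open>Mixtures of obedience and of the constant strategies: the coordinate \<open>None\<close> stands for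
  obeying the recommendation, the coordinate \<open>Some a\<close> for always playing \<open>a\<close>.\<close>

definition mixed_strategy :: "real ^ 'a option \<Rightarrow> real ^ 'a ^ 'a" where
  "mixed_strategy \<mu> = \<mu> $ None *\<^sub>R obedient + (\<Sum>a\<in>UNIV. \<mu> $ Some a *\<^sub>R always a)"

definition pure_payoffs :: "('a \<Rightarrow> 'w \<Rightarrow> real) \<Rightarrow> real ^ 'w \<Rightarrow> real ^ 'a ^ 'w \<Rightarrow> real ^ 'a option" where
  "pure_payoffs u p \<sigma> =
     (\<chi> i. case i of None \<Rightarrow> ur_p u p \<sigma> obedient | Some a \<Rightarrow> action_payoff u p a)"

lemma pure_payoffs_None [simp]: "pure_payoffs u p \<sigma> $ None = ur_p u p \<sigma> obedient"
  by (simp add: pure_payoffs_def)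

lemma pure_payoffs_Some [simp]: "pure_payoffs u p \<sigma> $ Some a = action_payoff u p a"
  by (simp add: pure_payoffs_def)

lemma sum_UNIV_option:
  fixes f :: "'a::finite option \<Rightarrow> 'b::comm_monoid_add"
  shows "(\<Sum>i\<in>UNIV. f i) = f None + (\<Sum>a\<in>UNIV. f (Some a))"
  by (simp add: UNIV_option_conv sum.reindex)

lemma strategy_mixed_strategy:
  assumes "is_dist \<mu>"
  shows "strategy (mixed_strategy \<mu>)"
proof -
  have entry: "mixed_strategy \<mu> $ m $ b = (if b = m then \<mu> $ None else 0) + \<mu> $ Some b" for m b
    by (simp add: mixed_strategy_def obedient_def always_def if_distrib if_distribR cong: if_cong)
  show ?thesis
    using assms unfolding strategy_def is_dist_def entry
    by (simp add: sum.distrib sum_UNIV_option[of "\<lambda>i. \<mu> $ i"])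
qed

lemma ur_p_mixed_strategy:
  assumes "canon_experiment \<sigma>"
  shows "ur_p u p \<sigma> (mixed_strategy \<mu>) = inner \<mu> (pure_payoffs u p \<sigma>)"
  using assms
  by (simp add: mixed_strategy_def pure_payoffs_def inner_vec_def sum_UNIV_option ur_p_always
      linear_add[OF linear_ur_p_strategy] linear_scale[OF linear_ur_p_strategy]
      linear_sum[OF linear_ur_p_strategy])

lemma inner_dist_const:
  assumes "is_dist \<mu>"
  shows "inner \<mu> (\<chi> _. v) = v"
  using assms by (simp add: inner_vec_def is_dist_def flip: sum_distrib_right)

definition obedience_gain :: "('a \<Rightarrow> 'w \<Rightarrow> real) \<Rightarrow> real ^ 'w \<Rightarrow> real ^ 'a ^ 'w \<Rightarrow> 'a \<Rightarrow> 'a \<Rightarrow> real" where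
  "obedience_gain u p \<sigma> m a = (\<Sum>w\<in>UNIV. p $ w * \<sigma> $ w $ m * (u m w - u a w))"

lemma ur_p_eq_obedient_minus_gains:
  assumes "strategy \<tau>"
  shows "ur_p u p \<sigma> \<tau> =
    ur_p u p \<sigma> obedient - (\<Sum>m\<in>UNIV. \<Sum>a\<in>UNIV. \<tau> $ m $ a * obedience_gain u p \<sigma> m a)"
proof -
  have rows: "(\<Sum>a\<in>UNIV. \<tau> $ m $ a) = 1" for m
    using assms by (simp add: strategy_def is_dist_def)
  have "(\<Sum>m\<in>UNIV. \<Sum>a\<in>UNIV. \<tau> $ m $ a * obedience_gain u p \<sigma> m a)
      = (\<Sum>m\<in>UNIV. \<Sum>a\<in>UNIV. \<Sum>w\<in>UNIV. p $ w * \<sigma> $ w $ m * \<tau> $ m $ a * (u m w - u a w))"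
    unfolding obedience_gain_def by (simp add: sum_distrib_left mult_ac)
  also have "\<dots> = (\<Sum>m\<in>UNIV. \<Sum>w\<in>UNIV. \<Sum>a\<in>UNIV. p $ w * \<sigma> $ w $ m * \<tau> $ m $ a * (u m w - u a w))"
    by (intro sum.cong refl) (rule sum.swap)
  also have "\<dots> = (\<Sum>w\<in>UNIV. \<Sum>m\<in>UNIV. \<Sum>a\<in>UNIV. p $ w * \<sigma> $ w $ m * \<tau> $ m $ a * (u m w - u a w))"
    by (rule sum.swap)
  also have "\<dots> = (\<Sum>w\<in>UNIV. \<Sum>m\<in>UNIV. p $ w * \<sigma> $ w $ m * u m w * (\<Sum>a\<in>UNIV. \<tau> $ m $ a))
      - ur_p u p \<sigma> \<tau>"
    unfolding ur_p_def by (simp add: algebra_simps sum_subtractf sum_distrib_left)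
  finally show ?thesis by (simp add: rows ur_p_obedient)
qed

lemma UNIV_eq_pair_if_card_2:
  assumes "CARD('a::finite) = 2" "(m :: 'a) \<noteq> a"
  shows "UNIV = {m, a}"
  using assms by (intro card_subset_eq[symmetric]) auto

text \<open>With two actions, deviating from \<open>m\<close> to \<open>a\<close> while obeying \<open>a\<close> means always playing \<open>a\<close>.\<close>

lemma obedience_gain_two_actions:
  assumes "CARD('a::finite) = 2" "canon_experiment \<sigma>" "(m :: 'a) \<noteq> a"
  shows "obedience_gain u p \<sigma> m a = ur_p u p \<sigma> obedient - action_payoff u p a"
proof -
  have UNIV: "UNIV = {m, a}" using UNIV_eq_pair_if_card_2[OF assms(1,3)] .
  have row: "is_dist (\<sigma> $ w)" for w using assms(2) by (simp add: canon_experiment_def)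
  have other: "\<sigma> $ w $ a = 1 - \<sigma> $ w $ m" for w
    using row[of w] assms(3) by (simp add: is_dist_def UNIV)
  show ?thesis
    using assms(3)
    by (simp add: obedience_gain_def ur_p_obedient action_payoff_def UNIV other algebra_simps
        sum_subtractf sum.distrib)
qed

lemma ur_p_le_obedient_two_actions:
  assumes "CARD('a) = 2" "canon_experiment \<sigma>" "strategy (\<tau> :: real ^ 'a ^ 'a)"
    and "\<forall>a. action_payoff u p a \<le> ur_p u p \<sigma> obedient"
  shows "ur_p u p \<sigma> \<tau> \<le> ur_p u p \<sigma> obedient"
proof -
  have "0 \<le> \<tau> $ m $ a * obedience_gain u p \<sigma> m a" for m a
  proof (cases "m = a")
    case True
    then show ?thesis by (simp add: obedience_gain_def)
  next
    case False
    then show ?thesis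
      using assms by (simp add: obedience_gain_two_actions strategy_def is_dist_def)
  qed
  then show ?thesis by (simp add: ur_p_eq_obedient_minus_gains[OF assms(3)] sum_nonneg)
qed

lemma obedient_in_BR_at_minimising_prior:
  fixes u :: "'a::finite \<Rightarrow> 'w::finite \<Rightarrow> real"
  assumes "\<forall>p\<in>P. is_dist p" "canon_experiment \<sigma>" "p \<in> P"
    and "\<forall>p'\<in>P. ur_p u p \<sigma> obedient \<le> ur_p u p' \<sigma> obedient"
    and "\<forall>\<tau>. strategy \<tau> \<longrightarrow> ur_p u p \<sigma> \<tau> \<le> ur_p u p \<sigma> obedient"
  shows "obedient \<in> BR u P \<sigma>"
  unfolding BR_def
proof (intro CollectI conjI allI impI strategy_obedient)
  fix \<tau> :: "real ^ 'a ^ 'a" assume \<tau>: "strategy \<tau>"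
  have "ur u P \<sigma> \<tau> \<le> ur_p u p \<sigma> \<tau>" by (rule ur_le_ur_p[OF assms(1,2) \<tau> assms(3)])
  also have "\<dots> \<le> ur_p u p \<sigma> obedient" using assms(5) \<tau> by blast
  also have "\<dots> = ur u P \<sigma> obedient"
    unfolding ur_def by (rule cInf_eq_minimum[symmetric]) (use assms(3,4) in auto)
  finally show "ur u P \<sigma> \<tau> \<le> ur u P \<sigma> obedient" .
qed

lemma priors_in_segment:
  fixes P :: "(real ^ 'w) set"
  assumes "CARD('w) = 2" "P \<noteq> {}" "closed P" "\<forall>p\<in>P. is_dist p"
  obtains p0 p1 where "p0 \<in> P" "p1 \<in> P" "P \<subseteq> closed_segment p0 p1"
proof -
  obtain w1 w2 :: 'w where w: "w1 \<noteq> w2" "UNIV = {w1, w2}"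
    using assms(1) unfolding card_2_iff by blast
  have dist_eqI: "p = q" if "is_dist p" "is_dist q" "p $ w1 = q $ w1" for p q :: "real ^ 'w"
    unfolding vec_eq_iff
  proof
    fix i
    have "i = w1 \<or> i = w2" using w(2) by blast
    moreover have "p $ w2 = q $ w2" using that w(1) unfolding is_dist_def w(2) by simp
    ultimately show "p $ i = q $ i" using that(3) by blast
  qed
  have cont: "continuous_on P (\<lambda>p. p $ w1)" by (intro continuous_intros)
  obtain p0 where p0: "p0 \<in> P" "\<forall>p\<in>P. p0 $ w1 \<le> p $ w1"
    using continuous_attains_inf[OF compact_dists[OF assms(3,4)] assms(2) cont] by blast
  obtain p1 where p1: "p1 \<in> P" "\<forall>p\<in>P. p $ w1 \<le> p1 $ w1"
    using continuous_attains_sup[OF compact_dists[OF assms(3,4)] assms(2) cont] by blast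
  have "p \<in> closed_segment p0 p1" if "p \<in> P" for p
  proof -
    define t where "t = (p $ w1 - p0 $ w1) / (p1 $ w1 - p0 $ w1)"
    have between: "p0 $ w1 \<le> p $ w1" "p $ w1 \<le> p1 $ w1" using p0 p1 that by auto
    then have t: "0 \<le> t" "t \<le> 1" unfolding t_def by (auto simp: divide_le_eq_1)
    \<comment> \<open>if \<open>p1 $ w1 = p0 $ w1\<close>, division by zero gives \<open>t = 0\<close>, and then \<open>p = p0\<close>\<close>
    have "t * (p1 $ w1 - p0 $ w1) = p $ w1 - p0 $ w1"
      using between unfolding t_def by (cases "p1 $ w1 = p0 $ w1") auto
    then have "((1 - t) *\<^sub>R p0 + t *\<^sub>R p1) $ w1 = p $ w1" by (simp add: algebra_simps)
    moreover have "is_dist ((1 - t) *\<^sub>R p0 + t *\<^sub>R p1)"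
      using t p0(1) p1(1) assms(4)
      by (auto simp: is_dist_def sum.distrib simp flip: sum_distrib_left)
    ultimately have "p = (1 - t) *\<^sub>R p0 + t *\<^sub>R p1"
      using dist_eqI assms(4) that by metis
    then show ?thesis using t by (auto simp: in_segment)
  qed
  then show ?thesis using that p0(1) p1(1) by blast
qed

lemma separation_from_nonpos_orthant:
  fixes H :: "(real ^ 'n) set"
  assumes "compact H" "convex H" "H \<noteq> {}" "H \<inter> {x. \<forall>i. x $ i \<le> 0} = {}"
  obtains \<mu> b where "is_dist \<mu>" "0 < b" "\<forall>h\<in>H. b \<le> inner \<mu> h"
proof -
  let ?N = "{x :: real ^ 'n. \<forall>i. x $ i \<le> 0}"
  have "convex ?N" by (auto simp: convex_def intro: add_nonpos_nonpos mult_nonneg_nonpos)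
  moreover have "closed ?N" by (intro closed_Collect_all closed_Collect_le continuous_intros)
  moreover have "?N \<inter> H = {}" using assms(4) by blast
  ultimately obtain l c where sep: "\<forall>x\<in>?N. inner l x < c" "\<forall>h\<in>H. c < inner l h"
    using separating_hyperplane_closed_compact[of ?N H] assms(1-3) by blast
  have "0 < c" using sep(1)[rule_format, of 0] by simp
  have l_nonneg: "0 \<le> l $ i" for i
  proof (rule ccontr)
    assume "\<not> 0 \<le> l $ i"
    then have "(c / l $ i) *\<^sub>R axis i 1 \<in> ?N"
      using \<open>0 < c\<close> by (auto simp: axis_def divide_pos_neg less_imp_le)
    moreover have "inner l ((c / l $ i) *\<^sub>R axis i 1) = c"
      using \<open>\<not> 0 \<le> l $ i\<close> by (simp add: inner_axis)
    ultimately show False using sep(1) by (metis less_irrefl)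
  qed
  define s where "s = (\<Sum>i\<in>UNIV. l $ i)"
  obtain h where "h \<in> H" using assms(3) by blast
  have "s \<noteq> 0"
  proof
    assume "s = 0"
    then have "l = 0" using l_nonneg by (simp add: s_def sum_nonneg_eq_0_iff vec_eq_iff)
    then show False using sep(2) \<open>h \<in> H\<close> \<open>0 < c\<close> by force
  qed
  then have "0 < s" using l_nonneg by (simp add: s_def sum_nonneg order_le_neq_trans)
  show ?thesis
  proof
    show "is_dist ((1 / s) *\<^sub>R l)"
      using l_nonneg \<open>0 < s\<close> by (simp add: is_dist_def s_def flip: sum_divide_distrib)
    show "0 < c / s" using \<open>0 < c\<close> \<open>0 < s\<close> by simp
    show "\<forall>h\<in>H. c / s \<le> inner ((1 / s) *\<^sub>R l) h"
      using sep(2) \<open>0 < s\<close> by (auto simp: divide_right_mono less_imp_le)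
  qed
qed

text \<open>The conclusion says that the weight \<open>d\<close> minimises \<open>t \<mapsto> (1 - t) * A + t * B\<close> over
  \<open>[0, 1]\<close> whenever \<open>A - B = (1 - \<theta>) * g0 + \<theta> * g1\<close>.\<close>

lemma affine_sign_crossing:
  fixes d g0 g1 :: real
  assumes "0 \<le> d" "d \<le> 1" "(1 - d) * g0 \<le> 0" "0 \<le> d * g1"
  obtains \<theta> where "0 \<le> \<theta>" "\<theta> \<le> 1"
    "\<And>t. 0 \<le> t \<Longrightarrow> t \<le> 1 \<Longrightarrow> 0 \<le> (d - t) * ((1 - \<theta>) * g0 + \<theta> * g1)"
proof -
  consider "0 < g0" | "g1 < 0" | "g0 \<le> 0" "0 \<le> g1" by linarith
  then show ?thesis
  proof cases
    case 1
    then have "d = 1" using assms by (smt (verit) mult_pos_pos)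
    show ?thesis
      by (rule that[of 0]) (use 1 \<open>d = 1\<close> in \<open>auto intro: mult_nonneg_nonneg\<close>)
  next
    case 2
    then have "d = 0" using assms by (smt (verit) mult_pos_neg)
    show ?thesis
      by (rule that[of 1]) (use 2 \<open>d = 0\<close> in \<open>auto intro: mult_nonneg_nonpos\<close>)
  next
    case 3
    show ?thesis
    proof (cases "g0 = g1")
      case True
      then show ?thesis using 3 that[of 0] by simp
    next
      case False
      define \<theta> where "\<theta> = g0 / (g0 - g1)"
      have "0 \<le> \<theta>" "\<theta> \<le> 1"
        using 3 False unfolding \<theta>_def by (auto simp: divide_le_eq_1 divide_nonpos_neg)
      moreover have "(1 - \<theta>) * g0 + \<theta> * g1 = 0"
        using False unfolding \<theta>_def by (simp add: field_simps)
      ultimately show ?thesis using that by simp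
    qed
  qed
qed

definition excess_payoffs ::
  "('a \<Rightarrow> 'w \<Rightarrow> real) \<Rightarrow> real \<Rightarrow> real ^ 'w \<Rightarrow> real ^ 'a ^ 'w \<Rightarrow> real ^ 'a option" where
  "excess_payoffs u v p \<sigma> = pure_payoffs u p \<sigma> - (\<chi> _. v)"

lemma excess_payoffs_convex_combination:
  "excess_payoffs u v p ((1 - t) *\<^sub>R \<sigma> + t *\<^sub>R \<sigma>') =
    (1 - t) *\<^sub>R excess_payoffs u v p \<sigma> + t *\<^sub>R excess_payoffs u v p \<sigma>'"
  unfolding vec_eq_iff
proof
  fix i :: "'a option"
  show "excess_payoffs u v p ((1 - t) *\<^sub>R \<sigma> + t *\<^sub>R \<sigma>') $ i =
    ((1 - t) *\<^sub>R excess_payoffs u v p \<sigma> + t *\<^sub>R excess_payoffs u v p \<sigma>') $ i"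
    by (cases i; simp add: excess_payoffs_def ur_p_convex_combination_experiment; simp add: algebra_simps)
qed

lemma convex_excess_payoffs_image:
  assumes "convex S"
  shows "convex (excess_payoffs u v p ` S)"
  unfolding convex_alt
proof (intro ballI allI impI)
  fix h h' and t :: real
  assume "h \<in> excess_payoffs u v p ` S" "h' \<in> excess_payoffs u v p ` S" and t: "0 \<le> t \<and> t \<le> 1"
  then obtain \<sigma> \<sigma>' where "\<sigma> \<in> S" "\<sigma>' \<in> S" "h = excess_payoffs u v p \<sigma>" "h' = excess_payoffs u v p \<sigma>'"
    by blast
  moreover have "(1 - t) *\<^sub>R \<sigma> + t *\<^sub>R \<sigma>' \<in> S"
    using assms \<open>\<sigma> \<in> S\<close> \<open>\<sigma>' \<in> S\<close> t unfolding convex_alt by blast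
  ultimately show "(1 - t) *\<^sub>R h + t *\<^sub>R h' \<in> excess_payoffs u v p ` S"
    by (metis excess_payoffs_convex_combination image_eqI)
qed

lemma continuous_on_excess_payoffs: "continuous_on S (excess_payoffs u v p)"
proof -
  have "continuous_on S
      (\<lambda>\<sigma>. case i of None \<Rightarrow> ur_p u p \<sigma> obedient | Some a \<Rightarrow> action_payoff u p a)" for i
    by (cases i) (simp_all add: continuous_on_ur_p_experiment)
  then have "continuous_on S (pure_payoffs u p)"
    unfolding pure_payoffs_def by (rule continuous_on_vec_lambda)
  then show ?thesis unfolding excess_payoffs_def by (intro continuous_on_diff continuous_on_const)
qed

lemma excess_payoff_hull_meets_nonpos_orthant:
  fixes u :: "'a::finite \<Rightarrow> 'w::finite \<Rightarrow> real"
  assumes P: "\<forall>p\<in>P. is_dist p" "P \<noteq> {}" "P \<subseteq> closed_segment p0 p1"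
    and S: "S \<noteq> {}" "compact S" "\<forall>\<sigma>\<in>S. canon_experiment \<sigma>"
    and obedient: "obedient \<in> BR_amb u P S"
  defines "v \<equiv> UR u P S obedient"
  shows "convex hull (excess_payoffs u v p0 ` S \<union> excess_payoffs u v p1 ` S)
    \<inter> {x. \<forall>i. x $ i \<le> 0} \<noteq> {}"
proof
  let ?H = "convex hull (excess_payoffs u v p0 ` S \<union> excess_payoffs u v p1 ` S)"
  assume disjoint: "?H \<inter> {x. \<forall>i. x $ i \<le> 0} = {}"
  have "compact (excess_payoffs u v q ` S)" for q
    by (rule compact_continuous_image[OF continuous_on_excess_payoffs S(2)])
  then have "compact ?H" by (intro compact_convex_hull compact_Un)
  moreover have "?H \<noteq> {}" using S(1) by simp
  ultimately obtain \<mu> b where \<mu>: "is_dist \<mu>" "0 < b" "\<forall>h\<in>?H. b \<le> inner \<mu> h"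
    using separation_from_nonpos_orthant[OF _ convex_convex_hull _ disjoint] by blast
  define \<tau> where "\<tau> = mixed_strategy \<mu>"
  have endpoint: "v + b \<le> ur_p u q \<sigma> \<tau>" if "q \<in> {p0, p1}" "\<sigma> \<in> S" for q \<sigma>
  proof -
    have "excess_payoffs u v q \<sigma> \<in> excess_payoffs u v p0 ` S \<union> excess_payoffs u v p1 ` S"
      using that by blast
    then have "excess_payoffs u v q \<sigma> \<in> ?H" by (rule hull_inc)
    then have "b \<le> inner \<mu> (excess_payoffs u v q \<sigma>)" using \<mu>(3) by blast
    also have "\<dots> = ur_p u q \<sigma> \<tau> - v"
      using \<mu>(1) S(3) that(2)
      by (simp add: \<tau>_def ur_p_mixed_strategy excess_payoffs_def inner_diff_right inner_dist_const)
    finally show ?thesis by simp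
  qed
  have above: "v + b \<le> ur_p u p \<sigma> \<tau>" if "p \<in> P" "\<sigma> \<in> S" for p \<sigma>
  proof -
    have "p \<in> closed_segment p0 p1" using P(3) that(1) by (rule subsetD)
    then obtain t where t: "0 \<le> t" "t \<le> 1" "p = (1 - t) *\<^sub>R p0 + t *\<^sub>R p1"
      by (auto simp: in_segment)
    have "v + b \<le> ur_p u p0 \<sigma> \<tau>" "v + b \<le> ur_p u p1 \<sigma> \<tau>"
      using endpoint[of p0 \<sigma>] endpoint[of p1 \<sigma>] that(2) by simp_all
    then have "(1 - t) * (v + b) + t * (v + b) \<le> (1 - t) * ur_p u p0 \<sigma> \<tau> + t * ur_p u p1 \<sigma> \<tau>"
      using t(1,2) by (auto intro!: add_mono mult_left_mono)
    then show ?thesis unfolding t(3) ur_p_convex_combination_prior by (simp add: algebra_simps)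
  qed
  have "v + b \<le> UR u P S \<tau>"
    unfolding UR_def ur_def by (intro cINF_greatest S(1) P(2) above)
  moreover have "UR u P S \<tau> \<le> v"
    using obedient strategy_mixed_strategy[OF \<mu>(1)] unfolding BR_amb_def v_def \<tau>_def by blast
  ultimately show False using \<mu>(2) by linarith
qed

lemma excess_hull_two_point:
  assumes "convex S"
    and "\<kappa> \<in> convex hull (excess_payoffs u v p0 ` S \<union> excess_payoffs u v p1 ` S)"
  obtains d x y where "0 \<le> d" "d \<le> 1" "x \<in> S" "y \<in> S"
    "\<kappa> = (1 - d) *\<^sub>R excess_payoffs u v p0 x + d *\<^sub>R excess_payoffs u v p1 y"
proof -
  have "S \<noteq> {}" using assms(2) by auto
  then have "\<kappa> \<in> {c *\<^sub>R h0 + d *\<^sub>R h1 | c d h0 h1. 0 \<le> c \<and> 0 \<le> d \<and> c + d = 1 \<and>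
      h0 \<in> excess_payoffs u v p0 ` S \<and> h1 \<in> excess_payoffs u v p1 ` S}"
    using assms(2) convex_hull_union_two[OF convex_excess_payoffs_image[OF assms(1)] _
        convex_excess_payoffs_image[OF assms(1)]]
    by simp
  then obtain c d h0 h1 where cd: "0 \<le> c" "0 \<le> d" "c + d = 1"
    and h: "h0 \<in> excess_payoffs u v p0 ` S" "h1 \<in> excess_payoffs u v p1 ` S"
    and \<kappa>: "\<kappa> = c *\<^sub>R h0 + d *\<^sub>R h1"
    by blast
  obtain x y where xy: "x \<in> S" "y \<in> S" "h0 = excess_payoffs u v p0 x" "h1 = excess_payoffs u v p1 y"
    using h by blast
  show ?thesis
  proof (rule that)
    show "0 \<le> d" "d \<le> 1" using cd by auto
    show "\<kappa> = (1 - d) *\<^sub>R excess_payoffs u v p0 x + d *\<^sub>R excess_payoffs u v p1 y"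
      using \<kappa> cd(3) xy(3,4) by (simp add: eq_diff_eq)
  qed (use xy in auto)
qed

lemma ur_p_minimal_on_segment:
  assumes "P \<subseteq> closed_segment p0 p1"
    and "\<And>t. 0 \<le> t \<Longrightarrow> t \<le> 1 \<Longrightarrow> 0 \<le> (d - t) * (ur_p u p0 \<sigma> \<tau> - ur_p u p1 \<sigma> \<tau>)"
  shows "\<forall>p'\<in>P. ur_p u ((1 - d) *\<^sub>R p0 + d *\<^sub>R p1) \<sigma> \<tau> \<le> ur_p u p' \<sigma> \<tau>"
proof
  fix p' assume "p' \<in> P"
  with assms(1) have "p' \<in> closed_segment p0 p1" by (rule subsetD)
  then obtain t where t: "0 \<le> t" "t \<le> 1" "p' = (1 - t) *\<^sub>R p0 + t *\<^sub>R p1"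
    by (auto simp: in_segment)
  have "ur_p u p' \<sigma> \<tau> - ur_p u ((1 - d) *\<^sub>R p0 + d *\<^sub>R p1) \<sigma> \<tau> =
      (d - t) * (ur_p u p0 \<sigma> \<tau> - ur_p u p1 \<sigma> \<tau>)"
    unfolding t(3) ur_p_convex_combination_prior by (simp add: algebra_simps)
  then show "ur_p u ((1 - d) *\<^sub>R p0 + d *\<^sub>R p1) \<sigma> \<tau> \<le> ur_p u p' \<sigma> \<tau>"
    using assms(2)[OF t(1,2)] by linarith
qed

lemma obedient_in_BR_two_actions:
  fixes u :: "'a::finite \<Rightarrow> 'w::finite \<Rightarrow> real"
  assumes "CARD('a) = 2" "\<forall>p\<in>P. is_dist p" "canon_experiment \<sigma>" "p \<in> P"
    and "\<forall>p'\<in>P. ur_p u p \<sigma> obedient \<le> ur_p u p' \<sigma> obedient"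
    and "\<forall>a. action_payoff u p a \<le> ur_p u p \<sigma> obedient"
  shows "obedient \<in> BR u P \<sigma>"
  using ur_p_le_obedient_two_actions[OF assms(1,3) _ assms(6)]
  by (intro obedient_in_BR_at_minimising_prior[OF assms(2-5)]) blast

lemma obedient_in_BR_from_nonpos_excess:
  fixes u :: "'a::finite \<Rightarrow> 'w::finite \<Rightarrow> real"
  assumes "CARD('a) = 2"
    and P: "\<forall>p\<in>P. is_dist p" "convex P" "p0 \<in> P" "p1 \<in> P" "P \<subseteq> closed_segment p0 p1"
    and S: "convex S" "\<forall>\<sigma>\<in>S. canon_experiment \<sigma>"
    and v: "\<forall>p\<in>P. \<forall>\<sigma>\<in>S. v \<le> ur_p u p \<sigma> obedient"
    and d: "0 \<le> d" "d \<le> 1" and xy: "x \<in> S" "y \<in> S"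
    and nonpos: "\<forall>i. ((1 - d) *\<^sub>R excess_payoffs u v p0 x + d *\<^sub>R excess_payoffs u v p1 y) $ i \<le> 0"
  shows "\<exists>\<sigma>\<in>S. obedient \<in> BR u P \<sigma>"
proof -
  let ?W = "\<lambda>p \<sigma>. ur_p u p \<sigma> obedient"
  have "v \<le> ?W p0 x" "v \<le> ?W p1 x" "v \<le> ?W p0 y" "v \<le> ?W p1 y"
    using v P(3,4) xy by blast+
  then have W_x: "0 \<le> (1 - d) * (?W p0 x - v)" "0 \<le> (1 - d) * (?W p1 x - v)"
    and W_y: "0 \<le> d * (?W p0 y - v)" "0 \<le> d * (?W p1 y - v)"
    using d by simp_all
  moreover have "(1 - d) * (?W p0 x - v) + d * (?W p1 y - v) \<le> 0"
    using nonpos[rule_format, of None] by (simp add: excess_payoffs_def)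
  ultimately have W_zero: "(1 - d) * (?W p0 x - v) = 0" "d * (?W p1 y - v) = 0"
    by linarith+
  have shift: "c * (a - b) = c * (a - v) - c * (b - v)" for c a b :: real
    by (simp add: algebra_simps)
  have "(1 - d) * (?W p0 x - ?W p1 x) \<le> 0"
    using W_x(2) W_zero(1) shift[of "1 - d" "?W p0 x" "?W p1 x"] by linarith
  moreover have "0 \<le> d * (?W p0 y - ?W p1 y)"
    using W_y(1) W_zero(2) shift[of d "?W p0 y" "?W p1 y"] by linarith
  \<comment> \<open>choose \<open>\<sigma>\<close> on \<open>[x, y]\<close> at which the prior \<open>(1 - d) p0 + d p1\<close> is minimising\<close>
  ultimately obtain \<theta> where \<theta>: "0 \<le> \<theta>" "\<theta> \<le> 1" and minimising_weight:
    "\<And>t. 0 \<le> t \<Longrightarrow> t \<le> 1 \<Longrightarrow>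
      0 \<le> (d - t) * ((1 - \<theta>) * (?W p0 x - ?W p1 x) + \<theta> * (?W p0 y - ?W p1 y))"
    using affine_sign_crossing[OF d] by blast
  define \<sigma> where "\<sigma> = (1 - \<theta>) *\<^sub>R x + \<theta> *\<^sub>R y"
  have "\<sigma> \<in> S" using S(1) xy \<theta> unfolding \<sigma>_def convex_alt by blast
  have "?W p0 \<sigma> - ?W p1 \<sigma> = (1 - \<theta>) * (?W p0 x - ?W p1 x) + \<theta> * (?W p0 y - ?W p1 y)"
    unfolding \<sigma>_def ur_p_convex_combination_experiment by (simp add: algebra_simps)
  then have minimising: "\<forall>p'\<in>P. ?W ((1 - d) *\<^sub>R p0 + d *\<^sub>R p1) \<sigma> \<le> ?W p' \<sigma>"
    using minimising_weight by (intro ur_p_minimal_on_segment[OF P(5)]) simp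
  define p where "p = (1 - d) *\<^sub>R p0 + d *\<^sub>R p1"
  have "p \<in> P" using P(2-4) d unfolding p_def convex_alt by blast
  have "v \<le> ?W p \<sigma>" using v \<open>p \<in> P\<close> \<open>\<sigma> \<in> S\<close> by blast
  moreover have "action_payoff u p a \<le> v" for a
    using nonpos[rule_format, of "Some a"] unfolding p_def action_payoff_convex_combination
    by (simp add: excess_payoffs_def algebra_simps)
  ultimately have "\<forall>a. action_payoff u p a \<le> ?W p \<sigma>" by (meson order_trans)
  then have "obedient \<in> BR u P \<sigma>"
    using obedient_in_BR_two_actions[OF assms(1) P(1) _ \<open>p \<in> P\<close>] minimising S(2) \<open>\<sigma> \<in> S\<close>
    unfolding p_def by blast
  then show ?thesis using \<open>\<sigma> \<in> S\<close> by blast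
qed

theorem mainTheorem4:
  fixes u :: "'a::finite \<Rightarrow> 'w::finite \<Rightarrow> real"
    and P :: "(real ^ 'w) set"
    and S :: "(real ^ 'a ^ 'w) set"
  assumes "CARD('w) = 2" and "CARD('a) = 2"
    and "P \<noteq> {}" and "closed P" and "convex P" and "\<forall>p\<in>P. is_dist p"
    and "S \<noteq> {}" and "closed S" and "convex S" and "\<forall>\<sigma>\<in>S. canon_experiment \<sigma>"
    and "obedient \<in> BR_amb u P S"
  shows "\<exists>\<sigma>\<in>S. obedient \<in> BR u P \<sigma>"
proof -
  obtain p0 p1 where segment: "p0 \<in> P" "p1 \<in> P" "P \<subseteq> closed_segment p0 p1"
    using priors_in_segment[OF assms(1,3,4,6)] by blast
  let ?v = "UR u P S obedient"
  have v: "\<forall>p\<in>P. \<forall>\<sigma>\<in>S. ?v \<le> ur_p u p \<sigma> obedient"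
  proof (intro ballI)
    fix p \<sigma> assume "p \<in> P" "\<sigma> \<in> S"
    have "?v \<le> ur u P \<sigma> obedient" by (rule UR_le_ur[OF assms(6,3,10) strategy_obedient \<open>\<sigma> \<in> S\<close>])
    also have "\<dots> \<le> ur_p u p \<sigma> obedient"
      using assms(10) \<open>\<sigma> \<in> S\<close> by (intro ur_le_ur_p[OF assms(6) _ strategy_obedient \<open>p \<in> P\<close>]) blast
    finally show "?v \<le> ur_p u p \<sigma> obedient" .
  qed
  obtain \<kappa> where \<kappa>: "\<kappa> \<in> convex hull (excess_payoffs u ?v p0 ` S \<union> excess_payoffs u ?v p1 ` S)"
    "\<forall>i. \<kappa> $ i \<le> 0"
    using excess_payoff_hull_meets_nonpos_orthant[OF assms(6,3) segment(3) assms(7)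
        compact_canon_experiments[OF assms(8,10)] assms(10,11)]
    by blast
  obtain d x y where dxy: "0 \<le> d" "d \<le> 1" "x \<in> S" "y \<in> S"
    and "\<kappa> = (1 - d) *\<^sub>R excess_payoffs u ?v p0 x + d *\<^sub>R excess_payoffs u ?v p1 y"
    using excess_hull_two_point[OF assms(9) \<kappa>(1)] by blast
  with \<kappa>(2) show ?thesis
    by (intro obedient_in_BR_from_nonpos_excess[OF assms(2,6,5) segment assms(9,10) v dxy]) simp
qed

end
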